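(* For every $i\in[d]$, all $r\in[m]$, any constant $c_1\ge10$, and every $x_{1:i}$ with $\|x_{1:i}\|_2\le\frac12$, with probability at least $1-\frac1{c_1}$ over the random initialization, the change in weights after $t$ SGD steps with learning rate $\eta$ satisfies $$\|w^{(t)}_{i,r}\|_2\le\eta\bar\Lambda t,\qquad |b^{(t)}_{i,r}|\le\eta\bar\Lambda t,\qquad\text{where }\bar\Lambda=6c_1\epsilon_a\sqrt{2\log m}.$$
   Context: UNF setting. Fix $d\ge1$, $m\ge2$, $\epsilon_a>0$, $Q\ge1$. For $\|x_{1:i}\|_2\le1$, $\hat x_{1:i}=(x_1,\dots,x_i,\sqrt{1-\|x_{1:i}\|_2^2})$. $\sigma(u)=\max\{u,0\}$ with $\sigma'(u)=\mathbf 1\{u\ge0\}$; $\phi(u)=e^u$ ($u<0$), $u+1$ ($u\ge0$). Frozen random initial parameters $a_{i,r}\sim\mathcal N(0,\epsilon_a^2)$, $\bar w_{i,r}\sim\mathcal N(0,\frac1mI_{i+1})$, $\bar b_{i,r}\sim\mathcal N(0,\frac1m)$, independent. Offsets $\theta_i=(w_{i,r},b_{i,r})_{r\in[m]}$, $\theta^{(0)}=0$. $N(x_{1:i};\theta_i)=\sum_ra_{i,r}\sigma(\langle\bar w_{i,r}+w_{i,r},\hat x_{1:i}\rangle+\bar b_{i,r}+b_{i,r})$, $\frac{\partial f_i}{\partial x_i}=\phi(N(\cdot;\theta_i))$. Quadrature: $\Delta_{x_i}=(x_i+1)/Q$, $q^{(j)}_i=(x_1,\dots,x_{i-1},-1+j\Delta_{x_i})$.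 Approximate loss $\tilde L(\nabla f,x)=\sum_{i}\big(\sum_{j=1}^Q\Delta_{x_i}\phi(N(q^{(j)}_i;\theta_i))-\log\phi(N(x_{1:i};\theta_i))\big)$. SGD: $\theta^{(t+1)}=\theta^{(t)}-\eta\nabla_\theta\tilde L(\nabla f^{(t)},x^{(t)})$ with $x^{(t)}$ drawn uniformly from a training set of points in the unit ball, where $f^{(t)}$ uses $\theta^{(t)}$; $w^{(t)}_{i,r},b^{(t)}_{i,r}$ are the components of $\theta^{(t)}$. *)

theory Defs
  imports "HOL-Probability.Probability"
begin

text \<open>Coordinates of the frozen random initialisation:
  A i r = a_{i,r};  W i r k = k-th component (k = 1..i+1) of wbar_{i,r};  B i r = bbar_{i,r}.\<close>
datatype coord = A nat nat | W nat nat nat | B nat nat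

definition init_coords :: "nat \<Rightarrow> nat \<Rightarrow> coord set" where
  "init_coords d m =
     {A i r | i r. i \<in> {1..d} \<and> r \<in> {1..m}} \<union>
     {W i r k | i r k. i \<in> {1..d} \<and> r \<in> {1..m} \<and> k \<in> {1..i+1}} \<union>
     {B i r | i r. i \<in> {1..d} \<and> r \<in> {1..m}}"

text \<open>Law of the initialisation: independent Gaussians (normal_density mu sigma, sigma = std. dev.):
  a ~ N(0, eps_a^2), wbar components ~ N(0, 1/m), bbar ~ N(0, 1/m).\<close>
definition init_measure :: "nat \<Rightarrow> nat \<Rightarrow> real \<Rightarrow> (coord \<Rightarrow> real) measure" where
  "init_measure d m eps_a =
     PiM (init_coords d m)
       (\<lambda>c. case c of
          A _ _ \<Rightarrow> density lborel (normal_density 0 eps_a)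
        | W _ _ _ \<Rightarrow> density lborel (normal_density 0 (1 / sqrt (real m)))
        | B _ _ \<Rightarrow> density lborel (normal_density 0 (1 / sqrt (real m))))"

definition relu :: "real \<Rightarrow> real" where "relu u = max u 0"
definition relu' :: "real \<Rightarrow> real" where "relu' u = (if u \<ge> 0 then 1 else 0)"
definition phi :: "real \<Rightarrow> real" where "phi u = (if u < 0 then exp u else u + 1)"
definition phi' :: "real \<Rightarrow> real" where "phi' u = (if u < 0 then exp u else 1)"

text \<open>Points are x :: nat => real with coordinates x 1, ..., x d.
  hat i x = (x_1,...,x_i, sqrt(1 - ||x_{1:i}||^2)), as a function on indices 1..i+1.\<close>
definition hat :: "nat \<Rightarrow> (nat \<Rightarrow> real) \<Rightarrow> nat \<Rightarrow> real" where
  "hat i x k = (if k \<le> i then x k else sqrt (1 - (\<Sum>l=1..i. (x l)^2)))"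

text \<open>Parameters (offsets): (w, b) with w i r k (k = 1..i+1) and b i r.\<close>
type_synonym params = "(nat \<Rightarrow> nat \<Rightarrow> nat \<Rightarrow> real) \<times> (nat \<Rightarrow> nat \<Rightarrow> real)"

definition preact :: "nat \<Rightarrow> (coord \<Rightarrow> real) \<Rightarrow> params \<Rightarrow> nat \<Rightarrow> nat \<Rightarrow> (nat \<Rightarrow> real) \<Rightarrow> real" where
  "preact m \<omega> \<theta> i r x =
     (\<Sum>k=1..i+1. (\<omega> (W i r k) + fst \<theta> i r k) * hat i x k) + \<omega> (B i r) + snd \<theta> i r"

definition Nnet :: "nat \<Rightarrow> (coord \<Rightarrow> real) \<Rightarrow> params \<Rightarrow> nat \<Rightarrow> (nat \<Rightarrow> real) \<Rightarrow> real" where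
  "Nnet m \<omega> \<theta> i x = (\<Sum>r=1..m. \<omega> (A i r) * relu (preact m \<omega> \<theta> i r x))"

definition Delta :: "nat \<Rightarrow> nat \<Rightarrow> (nat \<Rightarrow> real) \<Rightarrow> real" where
  "Delta Q i x = (x i + 1) / real Q"

definition qnode :: "nat \<Rightarrow> nat \<Rightarrow> (nat \<Rightarrow> real) \<Rightarrow> nat \<Rightarrow> nat \<Rightarrow> real" where
  "qnode Q i x j = x(i := -1 + real j * Delta Q i x)"

definition Ltilde :: "nat \<Rightarrow> nat \<Rightarrow> nat \<Rightarrow> (coord \<Rightarrow> real) \<Rightarrow> params \<Rightarrow> (nat \<Rightarrow> real) \<Rightarrow> real" where
  "Ltilde d m Q \<omega> \<theta> x =
     (\<Sum>i=1..d. (\<Sum>j=1..Q. Delta Q i x * phi (Nnet m \<omega> \<theta> i (qnode Q i x j)))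
                - ln (phi (Nnet m \<omega> \<theta> i x)))"

text \<open>Its gradient with respect to w_{i,r,k} and b_{i,r}, computed by the chain rule with the
  conventions sigma'(u) = 1{u >= 0} and phi' as above (only the i-th summand depends on theta_i).\<close>
definition grad_w :: "nat \<Rightarrow> nat \<Rightarrow> (coord \<Rightarrow> real) \<Rightarrow> params \<Rightarrow> (nat \<Rightarrow> real) \<Rightarrow> nat \<Rightarrow> nat \<Rightarrow> nat \<Rightarrow> real" where
  "grad_w m Q \<omega> \<theta> x i r k =
     (\<Sum>j=1..Q. Delta Q i x * phi' (Nnet m \<omega> \<theta> i (qnode Q i x j)) * \<omega> (A i r)
                 * relu' (preact m \<omega> \<theta> i r (qnode Q i x j)) * hat i (qnode Q i x j) k)
     - phi' (Nnet m \<omega> \<theta> i x) / phi (Nnet m \<omega> \<theta> i x) * \<omega> (A i r)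
                 * relu' (preact m \<omega> \<theta> i r x) * hat i x k"

definition grad_b :: "nat \<Rightarrow> nat \<Rightarrow> (coord \<Rightarrow> real) \<Rightarrow> params \<Rightarrow> (nat \<Rightarrow> real) \<Rightarrow> nat \<Rightarrow> nat \<Rightarrow> real" where
  "grad_b m Q \<omega> \<theta> x i r =
     (\<Sum>j=1..Q. Delta Q i x * phi' (Nnet m \<omega> \<theta> i (qnode Q i x j)) * \<omega> (A i r)
                 * relu' (preact m \<omega> \<theta> i r (qnode Q i x j)))
     - phi' (Nnet m \<omega> \<theta> i x) / phi (Nnet m \<omega> \<theta> i x) * \<omega> (A i r)
                 * relu' (preact m \<omega> \<theta> i r x)"

primrec sgd :: "nat \<Rightarrow> nat \<Rightarrow> real \<Rightarrow> (coord \<Rightarrow> real) \<Rightarrow> (nat \<Rightarrow> nat \<Rightarrow> real) \<Rightarrow> nat \<Rightarrow> params" where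
  "sgd m Q \<eta> \<omega> xs 0 = ((\<lambda>i r k. 0), (\<lambda>i r. 0))"
| "sgd m Q \<eta> \<omega> xs (Suc t) =
     (let \<theta> = sgd m Q \<eta> \<omega> xs t in
       ((\<lambda>i r k. fst \<theta> i r k - \<eta> * grad_w m Q \<omega> \<theta> (xs t) i r k),
        (\<lambda>i r. snd \<theta> i r - \<eta> * grad_b m Q \<omega> \<theta> (xs t) i r)))"

end

theory Submission
  imports Defs
begin

text \<open>Every factor multiplying \<open>a\<^sub>i\<^sub>,\<^sub>r\<close> in the gradient of the approximate loss lies in
  \<open>[0, 1]\<close>, the quadrature weights add up to \<open>x\<^sub>i + 1 \<le> 3/2\<close> and the lifted inputs have
  norm at most 2. Hence every SGD step moves \<open>w\<^sub>i\<^sub>,\<^sub>r\<close> and \<open>b\<^sub>i\<^sub>,\<^sub>r\<close> by at most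
  \<open>6 \<eta> |a\<^sub>i\<^sub>,\<^sub>r|\<close>, whatever the data. The only randomness that matters is the size of
  \<open>a\<^sub>i\<^sub>,\<^sub>r \<sim> N(0, \<epsilon>\<^sub>a\<^sup>2)\<close>: by Chebyshev's inequality it exceeds
  \<open>c\<^sub>1 \<epsilon>\<^sub>a \<surd>(2 log m)\<close> with probability at most \<open>1 / (2 c\<^sub>1\<^sup>2 log m) \<le> 1 / c\<^sub>1\<close>.\<close>

lemma phi'_bounds: "0 \<le> phi' u" "phi' u \<le> 1"
  by (auto simp: phi'_def)

lemma phi'_div_phi_bounds: "0 \<le> phi' u / phi u" "phi' u / phi u \<le> 1"
  by (auto simp: phi'_def phi_def)

lemma relu'_bounds: "0 \<le> relu' u" "relu' u \<le> 1"
  by (auto simp: relu'_def)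

lemma abs_mult_unit_factors_le:
  fixes p q a :: real
  assumes "0 \<le> p" "p \<le> 1" "0 \<le> q" "q \<le> 1"
  shows "\<bar>p * a * q\<bar> \<le> \<bar>a\<bar>"
proof -
  have "\<bar>p * a * q\<bar> = p * \<bar>a\<bar> * q"
    using assms by (simp add: abs_mult)
  also have "\<dots> \<le> 1 * \<bar>a\<bar> * 1"
    using assms by (intro mult_mono) auto
  finally show ?thesis by simp
qed

lemma L2_set_mult_abs: "L2_set (\<lambda>k. c * f k) S = \<bar>c\<bar> * L2_set f S"
  unfolding L2_set_def by (simp add: power_mult_distrib real_sqrt_mult flip: sum_distrib_left)

lemma L2_set_diff_le: "L2_set (\<lambda>k. f k - g k) S \<le> L2_set f S + L2_set g S"
  using L2_set_triangle_ineq[of f "\<lambda>k. - g k" S] by (simp add: L2_set_def)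

lemma L2_set_sum_le:
  "finite J \<Longrightarrow> L2_set (\<lambda>k. \<Sum>j\<in>J. f j k) S \<le> (\<Sum>j\<in>J. L2_set (f j) S)"
proof (induction J rule: finite_induct)
  case (insert a J)
  have "L2_set (\<lambda>k. f a k + (\<Sum>j\<in>J. f j k)) S \<le> L2_set (f a) S + L2_set (\<lambda>k. \<Sum>j\<in>J. f j k) S"
    by (rule L2_set_triangle_ineq)
  with insert show ?case by simp
qed (simp add: L2_set_0')

lemma L2_set_iterates_le:
  assumes "\<forall>k\<in>S. u 0 k = 0" "\<And>t k. u (Suc t) k = u t k - \<eta> * g t k"
    and "0 \<le> \<eta>" "\<And>t. L2_set (g t) S \<le> G"
  shows "L2_set (u t) S \<le> \<eta> * G * real t"
proof (induction t)
  case 0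
  then show ?case using assms(1) by (simp add: L2_set_0')
next
  case (Suc t)
  have "L2_set (u (Suc t)) S \<le> L2_set (u t) S + L2_set (\<lambda>k. \<eta> * g t k) S"
    unfolding assms(2) by (rule L2_set_diff_le)
  also have "\<dots> = L2_set (u t) S + \<eta> * L2_set (g t) S"
    using assms(3) by (simp add: L2_set_mult_abs)
  also have "\<dots> \<le> \<eta> * G * real t + \<eta> * G"
    using Suc.IH mult_left_mono[OF assms(4)[of t] assms(3)] by linarith
  finally show ?case by (simp add: algebra_simps)
qed

lemma sum_squares_hat:
  "(\<Sum>k=1..i+1. (hat i y k)\<^sup>2) = (\<Sum>l=1..i. (y l)\<^sup>2) + \<bar>1 - (\<Sum>l=1..i. (y l)\<^sup>2)\<bar>"
proof -
  \<comment> \<open>\<open>sqrt\<close> is odd on negative arguments, so the last coordinate squares to \<open>|1 - S|\<close>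
    also at quadrature nodes outside the unit ball.\<close>
  have "(sqrt z)\<^sup>2 = \<bar>z\<bar>" for z :: real
    by (metis power2_abs real_sqrt_abs' abs_ge_zero real_sqrt_pow2)
  moreover have "(\<Sum>k=1..i. (hat i y k)\<^sup>2) = (\<Sum>l=1..i. (y l)\<^sup>2)"
    by (rule sum.cong) (auto simp: hat_def)
  ultimately show ?thesis by (simp add: hat_def)
qed

lemma L2_set_hat_le:
  assumes "(\<Sum>l=1..i. (y l)\<^sup>2) \<le> 3/2"
  shows "L2_set (hat i y) {1..i+1} \<le> 2"
proof -
  have "(\<Sum>k=1..i+1. (hat i y k)\<^sup>2) \<le> 2\<^sup>2"
    unfolding sum_squares_hat using assms sum_nonneg[of "{1..i}" "\<lambda>l. (y l)\<^sup>2"] by auto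
  then have "L2_set (hat i y) {1..i+1} \<le> sqrt (2\<^sup>2)"
    unfolding L2_set_def by (rule real_sqrt_le_mono)
  then show ?thesis by simp
qed

lemma sum_squares_fun_upd_le:
  fixes x :: "nat \<Rightarrow> real"
  assumes "finite S"
  shows "(\<Sum>l\<in>S. ((x(i := v)) l)\<^sup>2) \<le> v\<^sup>2 + (\<Sum>l\<in>S. (x l)\<^sup>2)"
proof (cases "i \<in> S")
  case True
  have "(\<Sum>l\<in>S. ((x(i := v)) l)\<^sup>2) = v\<^sup>2 + (\<Sum>l\<in>S-{i}. (x l)\<^sup>2)"
    using assms True by (simp add: sum.remove)
  also have "\<dots> \<le> v\<^sup>2 + (\<Sum>l\<in>S. (x l)\<^sup>2)"
    using assms by (simp add: sum_mono2)
  finally show ?thesis .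
next
  case False
  then have "(\<Sum>l\<in>S. ((x(i := v)) l)\<^sup>2) = (\<Sum>l\<in>S. (x l)\<^sup>2)"
    by (intro sum.cong) auto
  then show ?thesis
    using zero_le_power2[of v] by linarith
qed

lemma Delta_nonneg: "-1 \<le> x i \<Longrightarrow> 0 \<le> Delta Q i x"
  by (simp add: Delta_def)

lemma of_nat_mult_Delta_le: "-1 \<le> x i \<Longrightarrow> real Q * Delta Q i x \<le> x i + 1"
  by (cases "Q = 0") (simp_all add: Delta_def)

lemma abs_qnode_le:
  assumes "\<bar>x i\<bar> \<le> 1" "j \<in> {1..Q}"
  shows "\<bar>qnode Q i x j i\<bar> \<le> 1"
proof -
  have "real j * Delta Q i x \<le> real Q * Delta Q i x"
    using assms by (intro mult_right_mono Delta_nonneg) auto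
  then have "real j * Delta Q i x \<le> x i + 1"
    using assms of_nat_mult_Delta_le[of x i Q] by linarith
  moreover have "0 \<le> real j * Delta Q i x"
    using assms by (simp add: Delta_nonneg)
  ultimately show ?thesis
    using assms by (simp add: qnode_def)
qed

lemma sum_squares_qnode_le:
  assumes "(\<Sum>l=1..i. (x l)\<^sup>2) \<le> 1/4" "\<bar>x i\<bar> \<le> 1" "j \<in> {1..Q}"
  shows "(\<Sum>l=1..i. (qnode Q i x j l)\<^sup>2) \<le> 3/2"
proof -
  have "\<bar>qnode Q i x j i\<bar>\<^sup>2 \<le> 1\<^sup>2"
    using abs_qnode_le[of x i j Q] assms(2,3) by (intro power_mono) auto
  then have "(qnode Q i x j i)\<^sup>2 \<le> 1"
    by simp
  moreover have "(\<Sum>l=1..i. (qnode Q i x j l)\<^sup>2) \<le> (qnode Q i x j i)\<^sup>2 + (\<Sum>l=1..i. (x l)\<^sup>2)"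
    unfolding qnode_def fun_upd_same by (rule sum_squares_fun_upd_le) simp
  ultimately show ?thesis
    using assms(1) by linarith
qed

lemma sum_abs_quadrature_coeff_le:
  assumes "\<bar>x i\<bar> \<le> 1/2"
  shows "(\<Sum>j=1..Q. \<bar>Delta Q i x * phi' (f j) * a * relu' (g j)\<bar>) \<le> 3/2 * \<bar>a\<bar>"
proof -
  have "(\<Sum>j=1..Q. \<bar>Delta Q i x * phi' (f j) * a * relu' (g j)\<bar>) \<le> (\<Sum>j=1..Q. Delta Q i x * \<bar>a\<bar>)"
  proof (rule sum_mono)
    fix j
    have "\<bar>phi' (f j) * a * relu' (g j)\<bar> \<le> \<bar>a\<bar>"
      by (intro abs_mult_unit_factors_le phi'_bounds relu'_bounds)
    then show "\<bar>Delta Q i x * phi' (f j) * a * relu' (g j)\<bar> \<le> Delta Q i x * \<bar>a\<bar>"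
      using assms Delta_nonneg[of x i Q]
      by (simp add: abs_mult mult.assoc mult_left_mono)
  qed
  also have "\<dots> = real Q * Delta Q i x * \<bar>a\<bar>"
    by simp
  also have "\<dots> \<le> 3/2 * \<bar>a\<bar>"
  proof (rule mult_right_mono)
    show "real Q * Delta Q i x \<le> 3/2"
      using assms of_nat_mult_Delta_le[of x i Q] by linarith
  qed simp
  finally show ?thesis .
qed

lemma abs_le_half_of_sum_squares_le:
  fixes x :: "nat \<Rightarrow> real"
  assumes "(\<Sum>l=1..i. (x l)\<^sup>2) \<le> 1/4" "1 \<le> i"
  shows "\<bar>x i\<bar> \<le> 1/2"
proof -
  have "(x i)\<^sup>2 \<le> (\<Sum>l=1..i. (x l)\<^sup>2)"
    using assms(2) by (intro member_le_sum) auto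
  then have "\<bar>x i\<bar>\<^sup>2 \<le> (1/2)\<^sup>2"
    using assms(1) by (simp add: power_divide)
  then show ?thesis
    by (rule power2_le_imp_le) simp
qed

lemma grad_bounds:
  assumes "(\<Sum>l=1..i. (x l)\<^sup>2) \<le> 1/4" "1 \<le> i"
  shows "L2_set (grad_w m Q \<omega> \<theta> x i r) {1..i+1} \<le> 6 * \<bar>\<omega> (A i r)\<bar>"
    and "\<bar>grad_b m Q \<omega> \<theta> x i r\<bar> \<le> 6 * \<bar>\<omega> (A i r)\<bar>"
proof -
  define a where "a = \<omega> (A i r)"
  define c where "c j = Delta Q i x * phi' (Nnet m \<omega> \<theta> i (qnode Q i x j)) * a
    * relu' (preact m \<omega> \<theta> i r (qnode Q i x j))" for j
  define c0 where "c0 = phi' (Nnet m \<omega> \<theta> i x) / phi (Nnet m \<omega> \<theta> i x) * a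
    * relu' (preact m \<omega> \<theta> i r x)"
  have xi: "\<bar>x i\<bar> \<le> 1/2"
    using assms by (rule abs_le_half_of_sum_squares_le)
  have sum_c: "(\<Sum>j=1..Q. \<bar>c j\<bar>) \<le> 3/2 * \<bar>a\<bar>"
    unfolding c_def using xi by (rule sum_abs_quadrature_coeff_le)
  have c0: "\<bar>c0\<bar> \<le> \<bar>a\<bar>"
    unfolding c0_def by (intro abs_mult_unit_factors_le phi'_div_phi_bounds relu'_bounds)
  have hat_q: "L2_set (hat i (qnode Q i x j)) {1..i+1} \<le> 2" if "j \<in> {1..Q}" for j
    using that assms xi by (intro L2_set_hat_le sum_squares_qnode_le) auto
  have hat_x: "L2_set (hat i x) {1..i+1} \<le> 2"
    using assms by (intro L2_set_hat_le) auto
  have "grad_w m Q \<omega> \<theta> x i r = (\<lambda>k. (\<Sum>j=1..Q. c j * hat i (qnode Q i x j) k) - c0 * hat i x k)"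
    by (simp add: grad_w_def c_def c0_def a_def fun_eq_iff)
  then have "L2_set (grad_w m Q \<omega> \<theta> x i r) {1..i+1}
      \<le> L2_set (\<lambda>k. \<Sum>j=1..Q. c j * hat i (qnode Q i x j) k) {1..i+1}
        + L2_set (\<lambda>k. c0 * hat i x k) {1..i+1}"
    by (simp only: L2_set_diff_le)
  also have "\<dots> \<le> (\<Sum>j=1..Q. L2_set (\<lambda>k. c j * hat i (qnode Q i x j) k) {1..i+1})
      + L2_set (\<lambda>k. c0 * hat i x k) {1..i+1}"
    by (intro add_right_mono L2_set_sum_le) simp
  also have "\<dots> = (\<Sum>j=1..Q. \<bar>c j\<bar> * L2_set (hat i (qnode Q i x j)) {1..i+1})
      + \<bar>c0\<bar> * L2_set (hat i x) {1..i+1}"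
    by (simp add: L2_set_mult_abs)
  also have "\<dots> \<le> (\<Sum>j=1..Q. \<bar>c j\<bar> * 2) + \<bar>c0\<bar> * 2"
    using hat_q hat_x by (intro add_mono sum_mono mult_left_mono) auto
  also have "\<dots> \<le> 6 * \<bar>a\<bar>"
    using sum_c c0 by (simp flip: sum_distrib_right)
  finally show "L2_set (grad_w m Q \<omega> \<theta> x i r) {1..i+1} \<le> 6 * \<bar>\<omega> (A i r)\<bar>"
    by (simp add: a_def)
  have "grad_b m Q \<omega> \<theta> x i r = (\<Sum>j=1..Q. c j) - c0"
    by (simp add: grad_b_def c_def c0_def a_def)
  then have "\<bar>grad_b m Q \<omega> \<theta> x i r\<bar> \<le> (\<Sum>j=1..Q. \<bar>c j\<bar>) + \<bar>c0\<bar>"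
    using sum_abs[of c "{1..Q}"] by linarith
  then show "\<bar>grad_b m Q \<omega> \<theta> x i r\<bar> \<le> 6 * \<bar>\<omega> (A i r)\<bar>"
    using sum_c c0 by (simp add: a_def)
qed

lemma sgd_bounds:
  assumes "\<And>s. (\<Sum>l=1..i. (xs s l)\<^sup>2) \<le> 1/4" "1 \<le> i" "0 \<le> \<eta>" "\<bar>\<omega> (A i r)\<bar> \<le> a"
  shows "L2_set (fst (sgd m Q \<eta> \<omega> xs t) i r) {1..i+1} \<le> \<eta> * (6 * a) * real t"
    and "\<bar>snd (sgd m Q \<eta> \<omega> xs t) i r\<bar> \<le> \<eta> * (6 * a) * real t"
proof -
  show "L2_set (fst (sgd m Q \<eta> \<omega> xs t) i r) {1..i+1} \<le> \<eta> * (6 * a) * real t"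
  proof (rule L2_set_iterates_le[where u = "\<lambda>t. fst (sgd m Q \<eta> \<omega> xs t) i r"
        and g = "\<lambda>t. grad_w m Q \<omega> (sgd m Q \<eta> \<omega> xs t) (xs t) i r"])
    show "L2_set (grad_w m Q \<omega> (sgd m Q \<eta> \<omega> xs t) (xs t) i r) {1..i+1} \<le> 6 * a" for t
      using grad_bounds(1)[OF assms(1)[of t] assms(2), of m Q \<omega> "sgd m Q \<eta> \<omega> xs t" r] assms(4)
      by linarith
  qed (simp_all add: Let_def assms(3))
  have "L2_set (\<lambda>_. snd (sgd m Q \<eta> \<omega> xs t) i r) {0::nat} \<le> \<eta> * (6 * a) * real t"
  proof (rule L2_set_iterates_le[where u = "\<lambda>t _. snd (sgd m Q \<eta> \<omega> xs t) i r"
        and g = "\<lambda>t _. grad_b m Q \<omega> (sgd m Q \<eta> \<omega> xs t) (xs t) i r"])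
    show "L2_set (\<lambda>_. grad_b m Q \<omega> (sgd m Q \<eta> \<omega> xs t) (xs t) i r) {0::nat} \<le> 6 * a" for t
      using grad_bounds(2)[OF assms(1)[of t] assms(2), of m Q \<omega> "sgd m Q \<eta> \<omega> xs t" r] assms(4)
      by simp
  qed (simp_all add: Let_def assms(3))
  then show "\<bar>snd (sgd m Q \<eta> \<omega> xs t) i r\<bar> \<le> \<eta> * (6 * a) * real t"
    by simp
qed

lemma relu_measurable [measurable]: "relu \<in> borel_measurable borel"
  unfolding relu_def by measurable

lemma relu'_measurable [measurable]: "relu' \<in> borel_measurable borel"
  unfolding relu'_def by measurable

lemma phi_measurable [measurable]: "phi \<in> borel_measurable borel"
  unfolding phi_def by measurable

lemma phi'_measurable [measurable]: "phi' \<in> borel_measurable borel"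
  unfolding phi'_def by measurable

definition coord_law :: "nat \<Rightarrow> real \<Rightarrow> coord \<Rightarrow> real measure" where
  "coord_law m eps_a c =
     (case c of
        A _ _ \<Rightarrow> density lborel (normal_density 0 eps_a)
      | W _ _ _ \<Rightarrow> density lborel (normal_density 0 (1 / sqrt (real m)))
      | B _ _ \<Rightarrow> density lborel (normal_density 0 (1 / sqrt (real m))))"

lemma init_measure_eq_PiM: "init_measure d m eps_a = Pi\<^sub>M (init_coords d m) (coord_law m eps_a)"
  unfolding init_measure_def coord_law_def ..

lemma sets_coord_law [measurable_cong]: "sets (coord_law m eps_a c) = sets borel"
  by (simp add: coord_law_def split: coord.split)

lemma prob_space_coord_law: "0 < eps_a \<Longrightarrow> 0 < m \<Longrightarrow> prob_space (coord_law m eps_a c)"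
  by (simp add: coord_law_def prob_space_normal_density split: coord.split)

lemma prob_space_init_measure: "0 < eps_a \<Longrightarrow> 0 < m \<Longrightarrow> prob_space (init_measure d m eps_a)"
  unfolding init_measure_eq_PiM by (intro prob_space_PiM prob_space_coord_law)

lemma measurable_init_coord [measurable]:
  "(\<lambda>\<omega>. \<omega> c) \<in> borel_measurable (init_measure d m eps_a)"
proof (cases "c \<in> init_coords d m")
  case True
  then show ?thesis
    unfolding init_measure_eq_PiM by measurable
next
  case False
  then have "\<omega> c = undefined" if "\<omega> \<in> space (init_measure d m eps_a)" for \<omega>
    using that by (auto simp: init_measure_eq_PiM space_PiM PiE_def extensional_def)
  then show ?thesis
    by (subst measurable_cong[where g = "\<lambda>_. undefined"]) auto
qed

lemma measurable_sgd [measurable]: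
  "(\<lambda>\<omega>. fst (sgd m Q \<eta> \<omega> xs t) i r k) \<in> borel_measurable (init_measure d m eps_a)"
  "(\<lambda>\<omega>. snd (sgd m Q \<eta> \<omega> xs t) i r) \<in> borel_measurable (init_measure d m eps_a)"
proof -
  have "(\<forall>i r k. (\<lambda>\<omega>. fst (sgd m Q \<eta> \<omega> xs t) i r k) \<in> borel_measurable (init_measure d m eps_a))
    \<and> (\<forall>i r. (\<lambda>\<omega>. snd (sgd m Q \<eta> \<omega> xs t) i r) \<in> borel_measurable (init_measure d m eps_a))"
  proof (induction t)
    case (Suc t)
    then have [measurable]:
      "\<And>i r k. (\<lambda>\<omega>. fst (sgd m Q \<eta> \<omega> xs t) i r k) \<in> borel_measurable (init_measure d m eps_a)"
      "\<And>i r. (\<lambda>\<omega>. snd (sgd m Q \<eta> \<omega> xs t) i r) \<in> borel_measurable (init_measure d m eps_a)"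
      by auto
    show ?case
      by (simp add: Let_def grad_w_def grad_b_def Nnet_def preact_def)
  qed simp
  then show
    "(\<lambda>\<omega>. fst (sgd m Q \<eta> \<omega> xs t) i r k) \<in> borel_measurable (init_measure d m eps_a)"
    "(\<lambda>\<omega>. snd (sgd m Q \<eta> \<omega> xs t) i r) \<in> borel_measurable (init_measure d m eps_a)"
    by blast+
qed

lemma distributed_init_A:
  assumes "i \<in> {1..d}" "r \<in> {1..m}" "0 < eps_a"
  shows "distributed (init_measure d m eps_a) lborel (\<lambda>\<omega>. \<omega> (A i r))
           (\<lambda>x. ennreal (normal_density 0 eps_a x))"
proof -
  have "A i r \<in> init_coords d m"
    using assms by (auto simp: init_coords_def)
  then have "distr (init_measure d m eps_a) (coord_law m eps_a (A i r)) (\<lambda>\<omega>. \<omega> (A i r))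
      = coord_law m eps_a (A i r)"
    unfolding init_measure_eq_PiM using assms
    by (intro distr_PiM_component prob_space_coord_law) auto
  then show ?thesis
    unfolding distributed_def by (simp add: coord_law_def cong: distr_cong)
qed

lemma (in prob_space) normal_distributed_Chebyshev:
  assumes "0 < \<sigma>" "distributed M lborel X (normal_density \<mu> \<sigma>)" "0 < K"
  shows "prob {x \<in> space M. K \<le> \<bar>X x - \<mu>\<bar>} \<le> \<sigma>\<^sup>2 / K\<^sup>2"
proof -
  have [measurable]: "X \<in> borel_measurable M"
    using distributed_measurable[OF assms(2)] by simp
  have "integrable lborel (\<lambda>x. normal_density \<mu> \<sigma> x * (x - \<mu>)\<^sup>2
      + 2 * \<mu> * (normal_density \<mu> \<sigma> x * x) - \<mu>\<^sup>2 * normal_density \<mu> \<sigma> x)"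
    using assms(1) by (intro Bochner_Integration.integrable_add Bochner_Integration.integrable_diff
        integrable_mult_right integrable_normal_moment integrable_normal_moment_nz_1) auto
  then have "integrable lborel (\<lambda>x. normal_density \<mu> \<sigma> x * x\<^sup>2)"
    by (simp add: power2_eq_square algebra_simps)
  then have "integrable M (\<lambda>x. (X x)\<^sup>2)"
    using distributed_integrable[OF assms(2), of "\<lambda>x. x\<^sup>2"] by simp
  from Chebyshev_inequality[OF _ this assms(3)] show ?thesis
    using normal_distributed_expectation[OF assms(1,2)] normal_distributed_variance[OF assms(1,2)]
    by simp
qed

lemma sq_div_sq_Chebyshev_level_le:
  assumes "1 \<le> c" "2 \<le> m" "0 < e"
  shows "e\<^sup>2 / (c * e * sqrt (2 * ln (real m)))\<^sup>2 \<le> 1 / c"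
proof -
  have "1/2 \<le> ln (2::real)"
    using ln_le_minus_one[of "1/2::real"] by (simp add: ln_div)
  also have "\<dots> \<le> ln (real m)"
    using assms(2) by simp
  finally have ln_m: "1 \<le> 2 * ln (real m)"
    by simp
  have "e\<^sup>2 / (c * e * sqrt (2 * ln (real m)))\<^sup>2 = 1 / (c * (c * (2 * ln (real m))))"
    using assms ln_m by (simp add: power_mult_distrib power2_eq_square)
  also have "\<dots> \<le> 1 / c"
  proof (intro divide_left_mono)
    have "1 * 1 \<le> c * (2 * ln (real m))"
      using assms(1) ln_m by (intro mult_mono) auto
    then show "c \<le> c * (c * (2 * ln (real m)))"
      using assms(1) mult_left_mono[of 1 "c * (2 * ln (real m))" c] by simp
  qed (use assms ln_m in auto)
  finally show ?thesis .
qed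

theorem lemma1:
  fixes d m Q :: nat and eps_a \<eta> c1 :: real and i r :: nat
    and xs :: "nat \<Rightarrow> nat \<Rightarrow> real"
  assumes "d \<ge> 1" and "m \<ge> 2" and "eps_a > 0" and "Q \<ge> 1" and "\<eta> > 0"
    and "i \<in> {1..d}" and "r \<in> {1..m}" and "c1 \<ge> 10"
    and "\<And>s. sqrt (\<Sum>k=1..d. (xs s k)^2) \<le> 1"
    and "\<And>s. sqrt (\<Sum>k=1..i. (xs s k)^2) \<le> 1/2"
  shows "measure (init_measure d m eps_a)
           {\<omega> \<in> space (init_measure d m eps_a).
              \<forall>t. sqrt (\<Sum>k=1..i+1. (fst (sgd m Q \<eta> \<omega> xs t) i r k)^2)
                     \<le> \<eta> * (6 * c1 * eps_a * sqrt (2 * ln (real m))) * real t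
                \<and> \<bar>snd (sgd m Q \<eta> \<omega> xs t) i r\<bar>
                     \<le> \<eta> * (6 * c1 * eps_a * sqrt (2 * ln (real m))) * real t}
         \<ge> 1 - 1 / c1"
  (is "_ \<le> measure ?M ?T")
proof -
  \<comment> \<open>The step bounds hold for any data with \<open>\<parallel>x\<^sub>1\<^sub>:\<^sub>i\<parallel> \<le> 1/2\<close>.\<close>
  interpret prob_space ?M
    using assms(2,3) by (intro prob_space_init_measure) auto
  define K where "K = c1 * eps_a * sqrt (2 * ln (real m))"
  define E where "E = {\<omega> \<in> space ?M. K \<le> \<bar>\<omega> (A i r)\<bar>}"
  have "0 < K"
    using assms(2,3,8) by (simp add: K_def)
  have "prob E \<le> eps_a\<^sup>2 / K\<^sup>2"
    using normal_distributed_Chebyshev[OF assms(3) distributed_init_A[OF assms(6,7,3)] \<open>0 < K\<close>]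
    by (simp add: E_def)
  also have "\<dots> \<le> 1 / c1"
    unfolding K_def using assms(2,3,8) by (intro sq_div_sq_Chebyshev_level_le) auto
  finally have "1 - 1 / c1 \<le> prob (space ?M - E)"
    by (subst prob_compl) (auto simp: E_def)
  also have "\<dots> \<le> prob ?T"
  proof (rule finite_measure_mono)
    have "(\<Sum>l=1..i. (xs s l)\<^sup>2) \<le> 1/4" for s
      using sqrt_le_D[OF assms(10)[of s]] by (simp add: power_divide)
    note bounds = sgd_bounds[where a = K, OF this _ less_imp_le[OF assms(5)]]
    show "space ?M - E \<subseteq> ?T"
      using bounds assms(6) by (auto simp: E_def K_def L2_set_def mult.assoc)
  qed measurable
  finally show ?thesis .
qed

end
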